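(* The functor $\tau:\mathbf{GrpwTop}\to\mathbf{TopGrp}$ satisfies: (1) $\tau$ preserves finite products: for groups with topology $G,H$ (with $G\times H$ given the product topology), the identity $\tau(G\times H)\to\tau(G)\times\tau(H)$ is an isomorphism of topological groups. (2) If a homomorphism $f:G\to H$ of groups with topology is a topological quotient map, then $\tau(f):\tau(G)\to\tau(H)$ is a quotient map. (3) A group with topology $G$ is a topological group if and only if $G=\tau(G)$ (as topological spaces). (4) A group with topology $G$ is discrete if and only if $\tau(G)$ is discrete.
   Context: A group with topology is a group with an arbitrary topology; $\mathbf{GrpwTop}$ is the category of such with continuous homomorphisms, $\mathbf{TopGrp}$ the category of topological groups. $F_M(S)$ is the free (Markov) topological group on a space $S$. For $G$ a group with topology, $\tau(G)$ is $G$ with the quotient topology with respect to the multiplication epimorphism $m_G:F_M(G)\to G$ sending each generator $g$ to $g$; on morphisms $\tau$ is the identity on underlying homomorphisms. *)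

theory Defs
  imports "HOL-Analysis.Analysis" "HOL-Algebra.Algebra"
begin

text \<open>A letter is a pair (x, b): (x, True) stands for x, (x, False) for its formal inverse.\<close>

definition reduce :: "('a \<times> bool) list \<Rightarrow> ('a \<times> bool) list" where
  "reduce xs = foldr (\<lambda>x ys. case ys of [] \<Rightarrow> [x]
      | y # ys' \<Rightarrow> (if fst x = fst y \<and> snd x \<noteq> snd y then ys' else x # ys)) xs []"

definition free_group :: "'a set \<Rightarrow> ('a \<times> bool) list monoid" where
  "free_group S = \<lparr> carrier = {w. set w \<subseteq> S \<times> UNIV \<and> reduce w = w},
                    mult = (\<lambda>u v. reduce (u @ v)), one = [] \<rparr>"

definition free_gen :: "'a \<Rightarrow> ('a \<times> bool) list" where
  "free_gen x = [(x, True)]"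

definition group_with_topology :: "('a, 'm) monoid_scheme \<Rightarrow> 'a topology \<Rightarrow> bool" where
  "group_with_topology G T \<longleftrightarrow> group G \<and> topspace T = carrier G"

definition topological_group :: "('a, 'm) monoid_scheme \<Rightarrow> 'a topology \<Rightarrow> bool" where
  "topological_group G T \<longleftrightarrow> group_with_topology G T
     \<and> continuous_map (prod_topology T T) T (\<lambda>(x, y). mult G x y)
     \<and> continuous_map T T (m_inv G)"

text \<open>F_M(S): the free group on the points of S with the finest group topology making
  the insertion of generators continuous (supremum of all such group topologies).\<close>

definition FM_topology :: "'a topology \<Rightarrow> ('a \<times> bool) list topology" where
  "FM_topology Y = topology_generated_by
     {U. \<exists>T. topological_group (free_group (topspace Y)) T
               \<and> continuous_map Y T free_gen \<and> openin T U}"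

definition mult_map :: "('a, 'm) monoid_scheme \<Rightarrow> ('a \<times> bool) list \<Rightarrow> 'a" where
  "mult_map G w = foldr (\<lambda>(x, b) acc. mult G (if b then x else m_inv G x) acc) w (one G)"

definition tau :: "('a, 'm) monoid_scheme \<Rightarrow> 'a topology \<Rightarrow> 'a topology" where
  "tau G T = topology (\<lambda>U. U \<subseteq> carrier G \<and>
      openin (FM_topology T) {w \<in> topspace (FM_topology T). mult_map G w \<in> U})"

end

theory Submission
  imports Defs
begin

text \<open>
  The whole
  proof rests on one universal property: \<open>\<tau>(G)\<close> is the finest group topology on G that is
  coarser than the given one (lemmas tau_coarser and tau_finest).  All four claims follow:
  (3) and (4) directly; functoriality by pulling \<open>\<tau>(H)\<close> back along a homomorphism; (2) since
  the quotient topology of \<open>\<tau>(G)\<close> along a quotient homomorphism is a group topology squeezed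
  between \<open>\<tau>(H)\<close> and H; and (1) using the projections and the inclusions of the factors.
\<close>

section \<open>Reduced words and the free group\<close>

definition red_step :: "('a \<times> bool) \<Rightarrow> ('a \<times> bool) list \<Rightarrow> ('a \<times> bool) list" where
  "red_step x ys = (case ys of [] \<Rightarrow> [x]
      | y # ys' \<Rightarrow> (if fst x = fst y \<and> snd x \<noteq> snd y then ys' else x # ys))"

lemma reduce_foldr: "reduce xs = foldr red_step xs []"
  unfolding reduce_def red_step_def[abs_def] by (rule refl)

fun reduced :: "('a \<times> bool) list \<Rightarrow> bool" where
  "reduced [] = True"
| "reduced [x] = True"
| "reduced (x # y # r) = (\<not> (fst x = fst y \<and> snd x \<noteq> snd y) \<and> reduced (y # r))"

lemma reduced_tl: "reduced (x # xs) \<Longrightarrow> reduced xs"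
  by (cases xs) auto

lemma reduced_red_step: "reduced ys \<Longrightarrow> reduced (red_step x ys)"
  by (cases ys) (auto simp: red_step_def intro: reduced_tl)

lemma reduced_foldr: "reduced ys \<Longrightarrow> reduced (foldr red_step xs ys)"
  by (induction xs) (auto intro: reduced_red_step)

lemma reduced_reduce: "reduced (reduce xs)"
  by (simp add: reduce_foldr reduced_foldr)

lemma reduce_reduced: "reduced xs \<Longrightarrow> reduce xs = xs"
proof (induction xs)
  case Nil then show ?case by (simp add: reduce_foldr)
next
  case (Cons x xs)
  then have "reduce xs = xs" using reduced_tl by blast
  then show ?case using Cons.prems
    by (cases xs) (auto simp: reduce_foldr red_step_def)
qed

lemma reduce_eq_iff: "reduce w = w \<longleftrightarrow> reduced w"
  by (metis reduce_reduced reduced_reduce)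

lemma red_step_cancel:
  assumes "reduced W" "fst x = fst y" "snd x \<noteq> snd y"
  shows "red_step x (red_step y W) = W"
proof (cases W)
  case Nil then show ?thesis using assms by (simp add: red_step_def)
next
  case (Cons z W')
  show ?thesis
  proof (cases "fst y = fst z \<and> snd y \<noteq> snd z")
    case True
    then have "x = z" using assms by (cases x, cases z) auto
    moreover have "red_step z W' = z # W'"
      using assms(1) Cons by (cases W') (auto simp: red_step_def)
    ultimately show ?thesis using True Cons by (simp add: red_step_def)
  next
    case False
    then show ?thesis using Cons assms by (auto simp add: red_step_def)
  qed
qed

lemma red_step_foldr:
  assumes "reduced r" "reduced z"
  shows "red_step x (foldr red_step r z) = foldr red_step (red_step x r) z"
proof (cases r)
  case Nil then show ?thesis by (simp add: red_step_def)
next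
  case (Cons y r')
  show ?thesis
  proof (cases "fst x = fst y \<and> snd x \<noteq> snd y")
    case True
    have "reduced (foldr red_step r' z)" using assms(2) by (rule reduced_foldr)
    then show ?thesis using True Cons red_step_cancel[of "foldr red_step r' z" x y]
      by (simp add: red_step_def[of x "y # r'"])
  next
    case False
    then show ?thesis using Cons by (auto simp add: red_step_def[of x "y # r'"])
  qed
qed

lemma foldr_reduce:
  assumes "reduced z"
  shows "foldr red_step xs z = foldr red_step (reduce xs) z"
proof (induction xs)
  case Nil then show ?case by (simp add: reduce_foldr)
next
  case (Cons x xs)
  have "foldr red_step (x # xs) z = red_step x (foldr red_step (reduce xs) z)"
    using Cons by simp
  also have "\<dots> = foldr red_step (red_step x (reduce xs)) z"
    by (rule red_step_foldr[OF reduced_reduce assms])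
  finally show ?case by (simp add: reduce_foldr)
qed

lemma reduce_append: "reduce (xs @ ys) = foldr red_step xs (reduce ys)"
  by (simp add: reduce_foldr)

lemma reduce_assoc: "reduce (reduce (u @ v) @ w) = reduce (u @ reduce (v @ w))"
proof -
  have "reduce (reduce (u @ v) @ w) = foldr red_step (reduce (u @ v)) (reduce w)"
    by (rule reduce_append)
  also have "\<dots> = foldr red_step (u @ v) (reduce w)"
    by (rule foldr_reduce[symmetric, OF reduced_reduce])
  also have "\<dots> = foldr red_step u (reduce (v @ w))"
    by (simp add: reduce_append)
  also have "\<dots> = reduce (u @ reduce (v @ w))"
    by (simp add: reduce_append reduce_reduced[OF reduced_foldr[OF reduced_reduce]])
  finally show ?thesis .
qed

text \<open>Reduction only deletes letters, so words over S stay words over S.\<close>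

lemma set_foldr_red_step: "set (foldr red_step xs ys) \<subseteq> set xs \<union> set ys"
proof -
  have "set (red_step x ys) \<subseteq> insert x (set ys)" for x :: "'a \<times> bool" and ys
    by (auto simp: red_step_def split: list.splits)
  then show ?thesis by (induction xs) fastforce+
qed

lemma set_reduce: "set (reduce xs) \<subseteq> set xs"
  using set_foldr_red_step[of xs "[]"] by (simp add: reduce_foldr)

definition word_inv :: "('a \<times> bool) list \<Rightarrow> ('a \<times> bool) list" where
  "word_inv w = rev (map (\<lambda>(a, b). (a, \<not> b)) w)"

lemma foldr_word_inv: "foldr red_step (word_inv w) w = []"
proof (induction w)
  case Nil then show ?case by (simp add: word_inv_def)
next
  case (Cons a w)
  obtain x b where a: "a = (x, b)" by force
  have "word_inv (a # w) = word_inv w @ [(x, \<not> b)]" by (simp add: word_inv_def a)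
  then show ?case using Cons by (simp add: a red_step_def)
qed

lemma free_group_group: "group (free_group S)"
proof (rule groupI)
  fix x y assume "x \<in> carrier (free_group S)" "y \<in> carrier (free_group S)"
  then show "x \<otimes>\<^bsub>free_group S\<^esub> y \<in> carrier (free_group S)"
    using set_reduce[of "x @ y"] by (auto simp: free_group_def reduce_eq_iff reduced_reduce)
next
  show "\<one>\<^bsub>free_group S\<^esub> \<in> carrier (free_group S)"
    by (simp add: free_group_def reduce_foldr)
next
  fix x y z
  show "x \<otimes>\<^bsub>free_group S\<^esub> y \<otimes>\<^bsub>free_group S\<^esub> z =
        x \<otimes>\<^bsub>free_group S\<^esub> (y \<otimes>\<^bsub>free_group S\<^esub> z)"
    by (simp add: free_group_def reduce_assoc)
next
  fix x assume "x \<in> carrier (free_group S)"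
  then show "\<one>\<^bsub>free_group S\<^esub> \<otimes>\<^bsub>free_group S\<^esub> x = x"
    by (simp add: free_group_def)
next
  fix x assume x: "x \<in> carrier (free_group S)"
  then have rx: "reduced x" by (simp add: free_group_def reduce_eq_iff)
  show "\<exists>y\<in>carrier (free_group S). y \<otimes>\<^bsub>free_group S\<^esub> x = \<one>\<^bsub>free_group S\<^esub>"
  proof (intro bexI)
    show "reduce (word_inv x) \<otimes>\<^bsub>free_group S\<^esub> x = \<one>\<^bsub>free_group S\<^esub>"
      using foldr_reduce[OF rx, of "word_inv x"] foldr_word_inv[of x]
      by (simp add: free_group_def reduce_append reduce_reduced rx)
    have "set (word_inv x) \<subseteq> S \<times> UNIV"
      using x by (force simp: free_group_def word_inv_def)
    then show "reduce (word_inv x) \<in> carrier (free_group S)"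
      using set_reduce[of "word_inv x"] by (auto simp: free_group_def reduce_eq_iff reduced_reduce)
  qed
qed

lemma free_gen_carrier: "x \<in> S \<Longrightarrow> free_gen x \<in> carrier (free_group S)"
  by (simp add: free_gen_def free_group_def reduce_foldr red_step_def)

lemma mult_map_Nil [simp]: "mult_map G [] = \<one>\<^bsub>G\<^esub>"
  by (simp add: mult_map_def)

lemma mult_map_Cons [simp]:
  "mult_map G ((a, b) # w) = (if b then a else inv\<^bsub>G\<^esub> a) \<otimes>\<^bsub>G\<^esub> mult_map G w"
  by (simp add: mult_map_def)

lemma mult_map_closed:
  assumes "group G" "fst ` set w \<subseteq> carrier G"
  shows "mult_map G w \<in> carrier G"
  using assms(2)
proof (induction w)
  case Nil then show ?case using assms(1) by (simp add: group.is_monoid monoid.one_closed)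
next
  case (Cons a w)
  then show ?case using assms(1)
    by (cases a) (auto simp: group.inv_closed monoid.m_closed group.is_monoid)
qed

lemma mult_map_red_step:
  assumes G: "group G" and "fst x \<in> carrier G" "fst ` set ys \<subseteq> carrier G"
  shows "mult_map G (red_step x ys) = mult_map G [x] \<otimes>\<^bsub>G\<^esub> mult_map G ys"
proof -
  interpret group G by (rule G)
  show ?thesis
  proof (cases ys)
    case Nil then show ?thesis using assms by (cases x) (simp add: red_step_def)
  next
    case (Cons y ys')
    have ys': "mult_map G ys' \<in> carrier G" using mult_map_closed[OF G, of ys'] assms Cons by auto
    obtain a b where x: "x = (a, b)" by force
    obtain c d where y: "y = (c, d)" by force
    have a: "a \<in> carrier G" using assms x by simp
    show ?thesis
      using Cons x y a ys' by (auto simp: red_step_def m_assoc[symmetric])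
  qed
qed

lemma mult_map_foldr:
  assumes G: "group G" and "fst ` set xs \<subseteq> carrier G" "fst ` set ys \<subseteq> carrier G"
  shows "mult_map G (foldr red_step xs ys) = mult_map G xs \<otimes>\<^bsub>G\<^esub> mult_map G ys"
  using assms(2)
proof (induction xs)
  case Nil
  then show ?case using mult_map_closed[OF G assms(3)] G by (simp add: group.is_monoid monoid.l_one)
next
  case (Cons x xs)
  interpret group G by (rule G)
  have s: "fst ` set (foldr red_step xs ys) \<subseteq> carrier G"
    using set_foldr_red_step[of xs ys] Cons.prems assms(3) by (auto 0 3)
  have c: "mult_map G [x] \<in> carrier G" "mult_map G xs \<in> carrier G" "mult_map G ys \<in> carrier G"
    using mult_map_closed[OF G] Cons.prems assms(3) by auto
  have "mult_map G (foldr red_step (x # xs) ys)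
          = mult_map G [x] \<otimes>\<^bsub>G\<^esub> (mult_map G xs \<otimes>\<^bsub>G\<^esub> mult_map G ys)"
    using mult_map_red_step[OF G _ s, of x] Cons by simp
  also have "\<dots> = mult_map G (x # xs) \<otimes>\<^bsub>G\<^esub> mult_map G ys"
    using c Cons.prems by (cases x) (auto simp add: m_assoc)
  finally show ?case .
qed

lemma mult_map_hom:
  assumes G: "group G"
  shows "mult_map G \<in> hom (free_group (carrier G)) G"
proof (rule homI)
  fix w assume "w \<in> carrier (free_group (carrier G))"
  then show "mult_map G w \<in> carrier G"
    by (intro mult_map_closed[OF G]) (auto simp: free_group_def)
next
  fix u v assume u: "u \<in> carrier (free_group (carrier G))" and v: "v \<in> carrier (free_group (carrier G))"
  have "fst ` set u \<subseteq> carrier G" "fst ` set v \<subseteq> carrier G" "reduce v = v"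
    using u v by (auto simp: free_group_def)
  then show "mult_map G (u \<otimes>\<^bsub>free_group (carrier G)\<^esub> v) = mult_map G u \<otimes>\<^bsub>G\<^esub> mult_map G v"
    using mult_map_foldr[OF G] by (simp add: free_group_def reduce_append)
qed

lemma mult_map_free_gen:
  assumes "group G" "x \<in> carrier G"
  shows "mult_map G (free_gen x) = x"
  using assms by (simp add: free_gen_def group.is_monoid monoid.r_one)

lemma mult_map_surj:
  assumes "group G"
  shows "mult_map G ` carrier (free_group (carrier G)) = carrier G"
proof
  show "mult_map G ` carrier (free_group (carrier G)) \<subseteq> carrier G"
    using mult_map_hom[OF assms] by (auto simp: hom_def)
  show "carrier G \<subseteq> mult_map G ` carrier (free_group (carrier G))"
    using mult_map_free_gen[OF assms] free_gen_carrier by (metis image_eqI subsetI)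
qed

definition coarser :: "'a topology \<Rightarrow> 'a topology \<Rightarrow> bool" where
  "coarser S T \<longleftrightarrow> topspace S = topspace T \<and> (\<forall>U. openin S U \<longrightarrow> openin T U)"

lemma coarser_refl: "coarser T T"
  by (simp add: coarser_def)

lemma coarser_antisym: "coarser S T \<Longrightarrow> coarser T S \<Longrightarrow> S = T"
  by (auto simp: coarser_def topology_eq)

lemma coarser_iff_continuous_id:
  "coarser S T \<longleftrightarrow> topspace S = topspace T \<and> continuous_map T S (\<lambda>x. x)"
proof -
  have "continuous_map T S (\<lambda>x. x) \<longleftrightarrow> (\<forall>U. openin S U \<longrightarrow> openin T U)"
    if "topspace S = topspace T"
    using that openin_subset[of S] by (auto simp: continuous_map_def Int_absorb1 Collect_conj_eq)
  then show ?thesis by (auto simp: coarser_def)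
qed

definition indiscrete_topology :: "'a set \<Rightarrow> 'a topology" where
  "indiscrete_topology A = topology (\<lambda>U. U = {} \<or> U = A)"

lemma openin_indiscrete_topology: "openin (indiscrete_topology A) U \<longleftrightarrow> U = {} \<or> U = A"
proof -
  have "istopology (\<lambda>U. U = {} \<or> U = A)"
    unfolding istopology_def
  proof (intro conjI allI impI)
    fix K :: "'a set set" assume "\<forall>S\<in>K. S = {} \<or> S = A"
    then have "K \<subseteq> {{}, A}" by auto
    then show "\<Union>K = {} \<or> \<Union>K = A" by auto
  qed auto
  then show ?thesis by (simp add: indiscrete_topology_def topology_inverse')
qed

lemma topspace_indiscrete_topology [simp]: "topspace (indiscrete_topology A) = A"
  unfolding topspace_def using openin_indiscrete_topology[of A] by auto

lemma continuous_map_into_indiscrete: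
  assumes "g ` topspace Z \<subseteq> A"
  shows "continuous_map Z (indiscrete_topology A) g"
proof -
  have "{x \<in> topspace Z. g x \<in> A} = topspace Z" using assms by auto
  then show ?thesis
    using assms by (auto simp: continuous_map_def openin_indiscrete_topology)
qed

definition quotient_topology :: "'a set \<Rightarrow> 'b topology \<Rightarrow> ('b \<Rightarrow> 'a) \<Rightarrow> 'a topology" where
  "quotient_topology A S q = topology (\<lambda>U. U \<subseteq> A \<and> openin S {x \<in> topspace S. q x \<in> U})"

lemma openin_quotient_topology:
  "openin (quotient_topology A S q) U \<longleftrightarrow> U \<subseteq> A \<and> openin S {x \<in> topspace S. q x \<in> U}"
proof -
  have "istopology (\<lambda>U. U \<subseteq> A \<and> openin S {x \<in> topspace S. q x \<in> U})"
    unfolding istopology_def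
  proof (rule conjI; intro allI impI)
    fix U V assume "U \<subseteq> A \<and> openin S {x \<in> topspace S. q x \<in> U}"
      and "V \<subseteq> A \<and> openin S {x \<in> topspace S. q x \<in> V}"
    moreover have "{x \<in> topspace S. q x \<in> U \<inter> V}
                     = {x \<in> topspace S. q x \<in> U} \<inter> {x \<in> topspace S. q x \<in> V}" by auto
    ultimately show "U \<inter> V \<subseteq> A \<and> openin S {x \<in> topspace S. q x \<in> U \<inter> V}" by auto
  next
    fix K assume "\<forall>U\<in>K. U \<subseteq> A \<and> openin S {x \<in> topspace S. q x \<in> U}"
    moreover have "{x \<in> topspace S. q x \<in> \<Union>K} = (\<Union>U\<in>K. {x \<in> topspace S. q x \<in> U})" by auto
    ultimately show "\<Union>K \<subseteq> A \<and> openin S {x \<in> topspace S. q x \<in> \<Union>K}" by auto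
  qed
  then show ?thesis by (simp add: quotient_topology_def topology_inverse')
qed

lemma topspace_quotient_topology:
  assumes "q ` topspace S \<subseteq> A"
  shows "topspace (quotient_topology A S q) = A"
proof -
  have "{x \<in> topspace S. q x \<in> A} = topspace S" using assms by auto
  then have "openin (quotient_topology A S q) A" by (simp add: openin_quotient_topology)
  then show ?thesis
    by (metis openin_quotient_topology openin_subset openin_topspace subset_antisym)
qed

lemma quotient_map_quotient_topology:
  assumes "q ` topspace S = A"
  shows "quotient_map S (quotient_topology A S q) q"
  using assms by (auto simp: quotient_map_def topspace_quotient_topology openin_quotient_topology)

lemma quotient_topology_of_quotient_map:
  assumes "quotient_map S T q"
  shows "quotient_topology (topspace T) S q = T"
  using assms openin_subset[of T]
  by (auto simp: topology_eq openin_quotient_topology quotient_map_def)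

lemma coarser_quotient_topology:
  assumes "continuous_map S T q"
  shows "coarser T (quotient_topology (topspace T) S q)"
  using assms continuous_map_image_subset_topspace[OF assms] openin_subset[of T]
  by (auto simp: coarser_def topspace_quotient_topology openin_quotient_topology continuous_map_def)

lemma coarser_quotient_topology_mono:
  assumes "coarser S S'" "q ` topspace S \<subseteq> A"
  shows "coarser (quotient_topology A S q) (quotient_topology A S' q)"
  using assms by (auto simp: coarser_def topspace_quotient_topology openin_quotient_topology)

lemma open_map_prod_map:
  assumes f: "open_map S S' f" and g: "open_map T T' g"
  shows "open_map (prod_topology S T) (prod_topology S' T') (\<lambda>(x, y). (f x, g y))"
  unfolding open_map_def
proof (intro allI impI)
  fix W assume W: "openin (prod_topology S T) W"
  show "openin (prod_topology S' T') ((\<lambda>(x, y). (f x, g y)) ` W)"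
  proof (subst openin_subopen, intro ballI)
    fix z assume "z \<in> (\<lambda>(x, y). (f x, g y)) ` W"
    then obtain x y where xy: "(x, y) \<in> W" "z = (f x, g y)" by auto
    then obtain U V where UV: "openin S U" "openin T V" "x \<in> U" "y \<in> V" "U \<times> V \<subseteq> W"
      using W unfolding openin_prod_topology_alt by meson
    show "\<exists>W'. openin (prod_topology S' T') W' \<and> z \<in> W' \<and> W' \<subseteq> (\<lambda>(x, y). (f x, g y)) ` W"
    proof (intro exI conjI)
      show "openin (prod_topology S' T') (f ` U \<times> g ` V)"
        using f g UV by (simp add: openin_prod_Times_iff open_map_def)
      show "z \<in> f ` U \<times> g ` V" using xy UV by auto
      show "f ` U \<times> g ` V \<subseteq> (\<lambda>(x, y). (f x, g y)) ` W" using UV by force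
    qed
  qed
qed

section \<open>Topological groups\<close>

lemma topological_group_group: "topological_group G T \<Longrightarrow> group G"
  by (simp add: topological_group_def group_with_topology_def)

lemma topological_group_topspace: "topological_group G T \<Longrightarrow> topspace T = carrier G"
  by (simp add: topological_group_def group_with_topology_def)

lemma topological_group_mult:
  "topological_group G T \<Longrightarrow> continuous_map (prod_topology T T) T (\<lambda>(x, y). x \<otimes>\<^bsub>G\<^esub> y)"
  by (simp add: topological_group_def)

lemma topological_group_inv: "topological_group G T \<Longrightarrow> continuous_map T T (m_inv G)"
  by (simp add: topological_group_def)

lemma discrete_topological_group:
  assumes "group G"
  shows "topological_group G (discrete_topology (carrier G))"
  using assms
  by (auto simp: topological_group_def group_with_topology_def group.inv_closed
      monoid.m_closed group.is_monoid simp flip: prod_topology_discrete_topology)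

lemma indiscrete_topological_group:
  assumes "group G"
  shows "topological_group G (indiscrete_topology (carrier G))"
  using assms
  by (auto simp: topological_group_def group_with_topology_def group.inv_closed
      monoid.m_closed group.is_monoid intro!: continuous_map_into_indiscrete)

lemma (in group) topological_group_right_translate_open:
  assumes T: "topological_group G T" and k: "k \<in> carrier G" and V: "openin T V"
  shows "openin T ((\<lambda>v. v \<otimes> k) ` V)"
proof -
  have ts: "topspace T = carrier G" by (rule topological_group_topspace[OF T])
  have Vc: "V \<subseteq> carrier G" using openin_subset[OF V] ts by simp
  have "continuous_map T (prod_topology T T) (\<lambda>x. (x, inv k))"
    using k ts by (intro continuous_map_pairedI) auto
  from continuous_map_compose[OF this topological_group_mult[OF T]]
  have "continuous_map T T (\<lambda>x. x \<otimes> inv k)" by (simp add: o_def)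
  from openin_continuous_map_preimage[OF this V]
  have "openin T {x \<in> topspace T. x \<otimes> inv k \<in> V}" .
  moreover have "{x \<in> topspace T. x \<otimes> inv k \<in> V} = (\<lambda>v. v \<otimes> k) ` V"
  proof (intro equalityI subsetI)
    fix x assume "x \<in> {x \<in> topspace T. x \<otimes> inv k \<in> V}"
    then have "x \<in> carrier G" "x \<otimes> inv k \<in> V" using ts by auto
    moreover from this have "x = (x \<otimes> inv k) \<otimes> k" using k by (simp add: m_assoc)
    ultimately show "x \<in> (\<lambda>v. v \<otimes> k) ` V" by blast
  qed (use Vc k ts in \<open>auto simp: m_assoc\<close>)
  ultimately show ?thesis by simp
qed

lemma topological_group_pullback:
  assumes S: "topological_group G S" and K: "group K" and h: "h \<in> hom K G"
  shows "topological_group K (pullback_topology (carrier K) h S)"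
proof -
  interpret K: group K by (rule K)
  interpret group_hom K G h using topological_group_group[OF S] h
    by (simp add: group_hom_def group_hom_axioms_def K)
  let ?P = "pullback_topology (carrier K) h S"
  have tsP: "topspace ?P = carrier K"
    using topological_group_topspace[OF S] by (auto simp: topspace_pullback_topology)
  have hc: "continuous_map ?P S h"
    using continuous_map_pullback[OF continuous_map_id, of "carrier K" h S] by simp
  have "continuous_map (prod_topology ?P ?P) S ((\<lambda>(x, y). x \<otimes>\<^bsub>G\<^esub> y) \<circ> (\<lambda>(x, y). (h x, h y)))"
    using hc by (intro continuous_map_compose[OF _ topological_group_mult[OF S]])
      (simp add: continuous_map_prod_top)
  then have "continuous_map (prod_topology ?P ?P) S (h \<circ> (\<lambda>(x, y). x \<otimes>\<^bsub>K\<^esub> y))"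
    by (rule continuous_map_eq) (auto simp: tsP)
  then have mult: "continuous_map (prod_topology ?P ?P) ?P (\<lambda>(x, y). x \<otimes>\<^bsub>K\<^esub> y)"
    by (rule continuous_map_pullback') (auto simp: tsP)
  have "continuous_map ?P S (m_inv G \<circ> h)"
    by (rule continuous_map_compose[OF hc topological_group_inv[OF S]])
  then have "continuous_map ?P S (h \<circ> m_inv K)"
    by (rule continuous_map_eq) (auto simp: tsP)
  then have inv: "continuous_map ?P ?P (m_inv K)"
    by (rule continuous_map_pullback') (auto simp: tsP)
  show ?thesis using mult inv tsP K by (simp add: topological_group_def group_with_topology_def)
qed

text \<open>Along a surjective homomorphism q : K \<rightarrow> H, the saturation of an open set V is the union
  of its right translates by the kernel, so q is an open map for the quotient topology.\<close>

lemma open_map_quotient_topology: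
  assumes S: "topological_group K S" and H: "group H" and q: "q \<in> hom K H"
    and surj: "q ` carrier K = carrier H"
  shows "open_map S (quotient_topology (carrier H) S q) q"
  unfolding open_map_def
proof (intro allI impI)
  interpret K: group K using topological_group_group[OF S] .
  interpret group_hom K H q using H q by (simp add: group_hom_def group_hom_axioms_def K.group_axioms)
  have ts: "topspace S = carrier K" by (rule topological_group_topspace[OF S])
  fix V assume V: "openin S V"
  have Vc: "V \<subseteq> carrier K" using openin_subset[OF V] ts by simp
  have "{x \<in> topspace S. q x \<in> q ` V} = (\<Union>k\<in>kernel K H q. (\<lambda>v. v \<otimes>\<^bsub>K\<^esub> k) ` V)"
  proof (intro equalityI subsetI)
    fix x assume "x \<in> {x \<in> topspace S. q x \<in> q ` V}"
    then obtain v where x: "x \<in> carrier K" and v: "v \<in> V" "q x = q v" using ts by auto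
    have vc: "v \<in> carrier K" using v Vc by auto
    define k where "k = inv\<^bsub>K\<^esub> v \<otimes>\<^bsub>K\<^esub> x"
    have "k \<in> kernel K H q" using x vc v by (simp add: kernel_def k_def)
    moreover have "x = v \<otimes>\<^bsub>K\<^esub> k" using x vc by (simp add: k_def K.m_assoc[symmetric])
    ultimately show "x \<in> (\<Union>k\<in>kernel K H q. (\<lambda>v. v \<otimes>\<^bsub>K\<^esub> k) ` V)" using v by blast
  qed (use Vc ts in \<open>auto simp: kernel_def\<close>)
  moreover have "openin S (\<Union>k\<in>kernel K H q. (\<lambda>v. v \<otimes>\<^bsub>K\<^esub> k) ` V)"
    by (intro openin_Union) (auto simp: kernel_def intro: K.topological_group_right_translate_open[OF S _ V])
  moreover have "q ` V \<subseteq> carrier H" using Vc by auto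
  ultimately show "openin (quotient_topology (carrier H) S q) (q ` V)"
    by (simp add: openin_quotient_topology)
qed

text \<open>Hence the quotient of a topological group by a surjective homomorphism is a topological
  group: q \<times> q is again an open surjection, thus a quotient map, and the group operations of H
  are induced from those of K through q.\<close>

lemma topological_group_quotient_topology:
  assumes S: "topological_group K S" and H: "group H" and q: "q \<in> hom K H"
    and surj: "q ` carrier K = carrier H"
  shows "topological_group H (quotient_topology (carrier H) S q)"
proof -
  interpret K: group K using topological_group_group[OF S] .
  interpret group_hom K H q using H q by (simp add: group_hom_def group_hom_axioms_def K.group_axioms)
  let ?Q = "quotient_topology (carrier H) S q"
  have ts: "topspace S = carrier K" by (rule topological_group_topspace[OF S])
  have qQ: "quotient_map S ?Q q"
    by (rule quotient_map_quotient_topology) (simp add: ts surj)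
  have tsQ: "topspace ?Q = carrier H"
    using quotient_imp_surjective_map[OF qQ] by (simp add: ts surj)
  have qc: "continuous_map S ?Q q" by (rule quotient_imp_continuous_map[OF qQ])
  have qq: "quotient_map (prod_topology S S) (prod_topology ?Q ?Q) (\<lambda>(x, y). (q x, q y))"
  proof (rule continuous_open_imp_quotient_map)
    show "continuous_map (prod_topology S S) (prod_topology ?Q ?Q) (\<lambda>(x, y). (q x, q y))"
      using qc by (simp add: continuous_map_prod_top)
    show "open_map (prod_topology S S) (prod_topology ?Q ?Q) (\<lambda>(x, y). (q x, q y))"
      using open_map_quotient_topology[OF S H q surj] by (intro open_map_prod_map)
    have "(\<lambda>(x, y). (q x, q y)) ` (topspace S \<times> topspace S) = q ` topspace S \<times> q ` topspace S"
      by force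
    then show "(\<lambda>(x, y). (q x, q y)) ` topspace (prod_topology S S) = topspace (prod_topology ?Q ?Q)"
      using quotient_imp_surjective_map[OF qQ] by simp
  qed
  have "continuous_map (prod_topology S S) ?Q (q \<circ> (\<lambda>(x, y). x \<otimes>\<^bsub>K\<^esub> y))"
    by (rule continuous_map_compose[OF topological_group_mult[OF S] qc])
  then have "continuous_map (prod_topology S S) ?Q ((\<lambda>(x, y). x \<otimes>\<^bsub>H\<^esub> y) \<circ> (\<lambda>(x, y). (q x, q y)))"
    by (rule continuous_map_eq) (auto simp: ts)
  then have mult: "continuous_map (prod_topology ?Q ?Q) ?Q (\<lambda>(x, y). x \<otimes>\<^bsub>H\<^esub> y)"
    by (rule continuous_compose_quotient_map[OF qq])
  have "continuous_map S ?Q (q \<circ> m_inv K)"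
    by (rule continuous_map_compose[OF topological_group_inv[OF S] qc])
  then have "continuous_map S ?Q (m_inv H \<circ> q)"
    by (rule continuous_map_eq) (auto simp: ts)
  then have inv: "continuous_map ?Q ?Q (m_inv H)"
    by (rule continuous_compose_quotient_map[OF qQ])
  show ?thesis using mult inv tsQ H by (simp add: topological_group_def group_with_topology_def)
qed

section \<open>The free (Markov) topological group\<close>

definition markov_admissible :: "'a topology \<Rightarrow> ('a \<times> bool) list topology \<Rightarrow> bool" where
  "markov_admissible Y T \<longleftrightarrow>
     topological_group (free_group (topspace Y)) T \<and> continuous_map Y T free_gen"

lemma FM_topology_admissible:
  "FM_topology Y = topology_generated_by {U. \<exists>T. markov_admissible Y T \<and> openin T U}"
  by (simp add: FM_topology_def markov_admissible_def)

text \<open>The indiscrete topology is admissible, so the generating family covers the free group.\<close>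

lemma markov_admissible_cover:
  "\<Union>{U. \<exists>T. markov_admissible Y T \<and> openin T U} = carrier (free_group (topspace Y))"
proof (intro equalityI subsetI)
  fix x assume "x \<in> \<Union>{U. \<exists>T. markov_admissible Y T \<and> openin T U}"
  then obtain U T where T: "markov_admissible Y T" and U: "openin T U" "x \<in> U" by auto
  have "topspace T = carrier (free_group (topspace Y))"
    using T by (simp add: markov_admissible_def topological_group_topspace)
  then show "x \<in> carrier (free_group (topspace Y))"
    using openin_subset[OF U(1)] U(2) by blast
next
  fix x assume "x \<in> carrier (free_group (topspace Y))"
  moreover have "markov_admissible Y (indiscrete_topology (carrier (free_group (topspace Y))))"
    unfolding markov_admissible_def
  proof
    show "topological_group (free_group (topspace Y)) (indiscrete_topology (carrier (free_group (topspace Y))))"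
      by (rule indiscrete_topological_group[OF free_group_group])
    show "continuous_map Y (indiscrete_topology (carrier (free_group (topspace Y)))) free_gen"
      by (rule continuous_map_into_indiscrete) (auto simp: free_gen_carrier)
  qed
  ultimately show "x \<in> \<Union>{U. \<exists>T. markov_admissible Y T \<and> openin T U}"
    using openin_indiscrete_topology by blast
qed

lemma topspace_FM_topology: "topspace (FM_topology Y) = carrier (free_group (topspace Y))"
  unfolding FM_topology_admissible topology_generated_by_topspace by (rule markov_admissible_cover)

lemma FM_topology_finer:
  assumes "markov_admissible Y T"
  shows "coarser T (FM_topology Y)"
  unfolding coarser_def
proof (intro conjI allI impI)
  show "topspace T = topspace (FM_topology Y)"
    using assms by (simp add: topspace_FM_topology markov_admissible_def topological_group_topspace)
  show "openin (FM_topology Y) U" if "openin T U" for U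
    unfolding FM_topology_admissible by (rule topology_generated_by_Basis) (use assms that in blast)
qed

lemma continuous_map_into_FM_topology:
  assumes "\<And>T. markov_admissible Y T \<Longrightarrow> continuous_map Z T f"
    and "f ` topspace Z \<subseteq> carrier (free_group (topspace Y))"
  shows "continuous_map Z (FM_topology Y) f"
  unfolding FM_topology_admissible
proof (rule continuous_on_generated_topo)
  fix U assume "U \<in> {U. \<exists>T. markov_admissible Y T \<and> openin T U}"
  then obtain T where "markov_admissible Y T" "openin T U" by auto
  from openin_continuous_map_preimage[OF assms(1)[OF this(1)] this(2)]
  show "openin Z (f -` U \<inter> topspace Z)" by (simp add: Int_commute Collect_conj_eq vimage_def)
next
  show "f ` topspace Z \<subseteq> \<Union>{U. \<exists>T. markov_admissible Y T \<and> openin T U}"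
    unfolding markov_admissible_cover by (rule assms(2))
qed

lemma FM_topology_free_gen: "continuous_map Y (FM_topology Y) free_gen"
  by (rule continuous_map_into_FM_topology) (auto simp: markov_admissible_def free_gen_carrier)

lemma topological_group_FM_topology:
  "topological_group (free_group (topspace Y)) (FM_topology Y)"
proof -
  let ?F = "free_group (topspace Y)" and ?M = "FM_topology Y"
  interpret group ?F by (rule free_group_group)
  have finer: "continuous_map ?M T (\<lambda>x. x)" if "markov_admissible Y T" for T
    using FM_topology_finer[OF that] by (simp add: coarser_iff_continuous_id)
  have "continuous_map (prod_topology ?M ?M) ?M (\<lambda>(x, y). x \<otimes>\<^bsub>?F\<^esub> y)"
  proof (rule continuous_map_into_FM_topology)
    fix T assume T: "markov_admissible Y T"
    then have "topological_group ?F T" by (simp add: markov_admissible_def)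
    have "continuous_map (prod_topology ?M ?M) (prod_topology T T) (\<lambda>(x, y). (x, y))"
      by (rule continuous_map_prod_top[THEN iffD2]) (use finer[OF T] in blast)
    from continuous_map_compose[OF this topological_group_mult[OF \<open>topological_group ?F T\<close>]]
    show "continuous_map (prod_topology ?M ?M) T (\<lambda>(x, y). x \<otimes>\<^bsub>?F\<^esub> y)"
      by (simp add: o_def case_prod_unfold)
  qed (auto simp: topspace_FM_topology)
  moreover have "continuous_map ?M ?M (m_inv ?F)"
  proof (rule continuous_map_into_FM_topology)
    fix T assume T: "markov_admissible Y T"
    then have "topological_group ?F T" by (simp add: markov_admissible_def)
    from continuous_map_compose[OF finer[OF T] topological_group_inv[OF this]]
    show "continuous_map ?M T (m_inv ?F)" by (simp add: o_def)
  qed (auto simp: topspace_FM_topology)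
  ultimately show ?thesis
    by (simp add: topological_group_def group_with_topology_def topspace_FM_topology free_group_group)
qed

section \<open>The functor \<open>\<tau>\<close>\<close>

lemma tau_eq_quotient_topology:
  "tau G T = quotient_topology (carrier G) (FM_topology T) (mult_map G)"
  by (simp add: tau_def quotient_topology_def)

lemma topspace_tau:
  assumes "group_with_topology G T"
  shows "topspace (tau G T) = carrier G"
  using assms mult_map_hom unfolding tau_eq_quotient_topology group_with_topology_def
  by (intro topspace_quotient_topology) (auto simp: topspace_FM_topology hom_def)

text \<open>\<open>\<tau>(G)\<close> is a topological group, being a quotient of the topological group F_M(G).\<close>

lemma topological_group_tau:
  assumes "group_with_topology G T"
  shows "topological_group G (tau G T)"
proof -
  have G: "group G" and ts: "topspace T = carrier G"
    using assms by (auto simp: group_with_topology_def)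
  have "topological_group (free_group (carrier G)) (FM_topology T)"
    using topological_group_FM_topology[of T] by (simp add: ts)
  then show ?thesis
    unfolding tau_eq_quotient_topology
    by (rule topological_group_quotient_topology[OF _ G mult_map_hom[OF G] mult_map_surj[OF G]])
qed

text \<open>\<open>\<tau>(G)\<close> is coarser than G: the generators embed G continuously in F_M(G), and multiplying
  out a single generator gives it back.\<close>

lemma tau_coarser:
  assumes "group_with_topology G T"
  shows "coarser (tau G T) T"
  unfolding coarser_def
proof (intro conjI allI impI)
  have G: "group G" and ts: "topspace T = carrier G"
    using assms by (auto simp: group_with_topology_def)
  show "topspace (tau G T) = topspace T" by (simp add: topspace_tau[OF assms] ts)
  fix U assume "openin (tau G T) U"
  then have U: "U \<subseteq> carrier G"
    and P: "openin (FM_topology T) {w \<in> topspace (FM_topology T). mult_map G w \<in> U}"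
    by (auto simp: tau_eq_quotient_topology openin_quotient_topology)
  from openin_continuous_map_preimage[OF FM_topology_free_gen P]
  have "openin T {x \<in> topspace T. free_gen x \<in> {w \<in> topspace (FM_topology T). mult_map G w \<in> U}}" .
  moreover have "{x \<in> topspace T. free_gen x \<in> {w \<in> topspace (FM_topology T). mult_map G w \<in> U}} = U"
    using U by (auto simp: ts topspace_FM_topology free_gen_carrier mult_map_free_gen[OF G])
  ultimately show "openin T U" by simp
qed

text \<open>Pulling such a group topology S back along the multiplication map gives an admissible
  topology on F_M(G), whose open sets are therefore open in F_M(G).\<close>

lemma tau_finest:
  assumes GT: "group_with_topology G T" and S: "topological_group G S" and ST: "coarser S T"
  shows "coarser S (tau G T)"
  unfolding coarser_def
proof (intro conjI allI impI)
  have G: "group G" and ts: "topspace T = carrier G"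
    using GT by (auto simp: group_with_topology_def)
  let ?F = "free_group (carrier G)"
  let ?P = "pullback_topology (carrier ?F) (mult_map G) S"
  show "topspace S = topspace (tau G T)"
    by (simp add: topspace_tau[OF GT] topological_group_topspace[OF S])
  have idc: "continuous_map T S (\<lambda>x. x)" using ST by (simp add: coarser_iff_continuous_id)
  have "continuous_map T ?P free_gen"
  proof (rule continuous_map_pullback')
    show "continuous_map T S (mult_map G \<circ> free_gen)"
      by (rule continuous_map_eq[OF idc]) (simp add: ts mult_map_free_gen[OF G])
  qed (auto simp: ts free_gen_carrier)
  then have adm: "markov_admissible T ?P"
    using topological_group_pullback[OF S free_group_group mult_map_hom[OF G]]
    by (simp add: markov_admissible_def ts)
  fix U assume U: "openin S U"
  then have "openin ?P (mult_map G -` U \<inter> carrier ?F)"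
    by (auto simp: openin_pullback_topology)
  then have "openin (FM_topology T) (mult_map G -` U \<inter> carrier ?F)"
    using FM_topology_finer[OF adm] by (simp add: coarser_def)
  moreover have "mult_map G -` U \<inter> carrier ?F = {w \<in> topspace (FM_topology T). mult_map G w \<in> U}"
    by (auto simp: topspace_FM_topology ts)
  moreover have "U \<subseteq> carrier G"
    using openin_subset[OF U] topological_group_topspace[OF S] by simp
  ultimately show "openin (tau G T) U"
    by (simp add: tau_eq_quotient_topology openin_quotient_topology)
qed

text \<open>Functoriality: a continuous homomorphism stays continuous after applying \<open>\<tau>\<close>, since
  the pullback of \<open>\<tau>(H)\<close> along it is a group topology on G coarser than the topology of G.\<close>

lemma tau_continuous_map:
  assumes G: "group_with_topology G TG" and H: "group_with_topology H TH"
    and f: "f \<in> hom G H" and fc: "continuous_map TG TH f"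
  shows "continuous_map (tau G TG) (tau H TH) f"
proof -
  have grp: "group G" and tsG: "topspace TG = carrier G"
    using G by (auto simp: group_with_topology_def)
  let ?P = "pullback_topology (carrier G) f (tau H TH)"
  have tsP: "topspace ?P = carrier G"
    using f by (auto simp: topspace_pullback_topology topspace_tau[OF H] hom_def)
  have P: "topological_group G ?P"
    by (rule topological_group_pullback[OF topological_group_tau[OF H] grp f])
  have "coarser ?P TG"
    unfolding coarser_def
  proof (intro conjI allI impI)
    fix U assume "openin ?P U"
    then obtain V where V: "openin (tau H TH) V" "U = f -` V \<inter> carrier G"
      by (auto simp: openin_pullback_topology)
    have "openin TH V" using tau_coarser[OF H] V(1) by (simp add: coarser_def)
    from openin_continuous_map_preimage[OF fc this]
    show "openin TG U" using V tsG by (simp add: Int_commute Collect_conj_eq vimage_def)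
  qed (simp add: tsP tsG)
  then have "coarser ?P (tau G TG)" by (rule tau_finest[OF G P])
  then have idc: "continuous_map (tau G TG) ?P (\<lambda>x. x)" by (simp add: coarser_iff_continuous_id)
  have "continuous_map ?P (tau H TH) f"
    using continuous_map_pullback[OF continuous_map_id, of "carrier G" f "tau H TH"] by simp
  from continuous_map_compose[OF idc this] show ?thesis by (simp add: o_def)
qed

lemma tau_eq_iff_topological_group:
  assumes "group_with_topology G T"
  shows "topological_group G T \<longleftrightarrow> tau G T = T"
proof
  assume "topological_group G T"
  then show "tau G T = T"
    using coarser_antisym[OF tau_coarser tau_finest[OF _ _ coarser_refl]] assms by blast
next
  assume "tau G T = T"
  then show "topological_group G T" using topological_group_tau[OF assms] by simp
qed

text \<open>(4) G is discrete exactly when \<open>\<tau>(G)\<close> is: the discrete topology is a group topology, and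
  \<open>\<tau>(G)\<close> is coarser than G.\<close>

lemma tau_discrete_iff:
  assumes GT: "group_with_topology G T"
  shows "T = discrete_topology (carrier G) \<longleftrightarrow> tau G T = discrete_topology (carrier G)"
proof
  have G: "group G" and ts: "topspace T = carrier G"
    using GT by (auto simp: group_with_topology_def)
  {
    assume T: "T = discrete_topology (carrier G)"
    then have "topological_group G T" using discrete_topological_group[OF G] by simp
    then show "tau G T = discrete_topology (carrier G)"
      using tau_eq_iff_topological_group[OF GT] T by simp
  }
  assume "tau G T = discrete_topology (carrier G)"
  then have "openin T {x}" if "x \<in> carrier G" for x
    using tau_coarser[OF GT] that by (simp add: coarser_def)
  then have "discrete_topology (carrier G) = T"
    unfolding discrete_topology_unique using ts by blast
  then show "T = discrete_topology (carrier G)" by simp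
qed

text \<open>(2) \<open>\<tau>\<close> preserves quotient homomorphisms: the quotient topology of \<open>\<tau>(G)\<close> along f is a
  group topology coarser than H, hence coarser than \<open>\<tau>(H)\<close>; conversely it is finer than
  \<open>\<tau>(H)\<close> because f is continuous for \<open>\<tau>\<close>.  So \<open>\<tau>(H)\<close> is that quotient topology.\<close>

lemma tau_quotient_map:
  assumes G: "group_with_topology G TG" and H: "group_with_topology H TH"
    and f: "f \<in> hom G H" and qf: "quotient_map TG TH f"
  shows "quotient_map (tau G TG) (tau H TH) f"
proof -
  have tsG: "topspace TG = carrier G" and tsH: "topspace TH = carrier H" and "group H"
    using G H by (auto simp: group_with_topology_def)
  have surj: "f ` carrier G = carrier H"
    using quotient_imp_surjective_map[OF qf] by (simp add: tsG tsH)
  let ?Q = "quotient_topology (carrier H) (tau G TG) f"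
  have Q: "topological_group H ?Q"
    by (rule topological_group_quotient_topology[OF topological_group_tau[OF G] \<open>group H\<close> f surj])
  have "coarser ?Q (quotient_topology (topspace TH) TG f)"
    unfolding tsH
    by (rule coarser_quotient_topology_mono[OF tau_coarser[OF G]]) (simp add: topspace_tau[OF G] surj)
  then have "coarser ?Q TH" by (simp only: quotient_topology_of_quotient_map[OF qf])
  then have "coarser ?Q (tau H TH)" by (rule tau_finest[OF H Q])
  moreover have "coarser (tau H TH) ?Q"
    using coarser_quotient_topology[OF tau_continuous_map[OF G H f quotient_imp_continuous_map[OF qf]]]
    by (simp add: topspace_tau[OF H])
  ultimately have "tau H TH = ?Q" by (rule coarser_antisym[symmetric])
  then show ?thesis
    using quotient_map_quotient_topology[of f "tau G TG" "carrier H"] surj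
    by (simp add: topspace_tau[OF G])
qed

lemma group_with_topology_DirProd:
  assumes "group_with_topology G TG" and "group_with_topology H TH"
  shows "group_with_topology (G \<times>\<times> H) (prod_topology TG TH)"
  using assms by (simp add: group_with_topology_def DirProd_group)

text \<open>The inclusions of the factors are continuous homomorphisms and \<open>\<tau>(G \<times> H)\<close> is a
  topological group, so (g, h) = (g, 1)(1, h) depends continuously on (g, h) \<in> \<open>\<tau>(G) \<times> \<tau>(H)\<close>.\<close>

lemma continuous_map_prod_tau_into_tau_prod:
  assumes G: "group_with_topology G TG" and H: "group_with_topology H TH"
  shows "continuous_map (prod_topology (tau G TG) (tau H TH)) (tau (G \<times>\<times> H) (prod_topology TG TH))
           (\<lambda>z. z)"
proof -
  have grp: "group G" "group H" and ts: "topspace TG = carrier G" "topspace TH = carrier H"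
    using G H by (auto simp: group_with_topology_def)
  note GH = group_with_topology_DirProd[OF G H]
  let ?tGH = "tau (G \<times>\<times> H) (prod_topology TG TH)"
  let ?PT = "prod_topology (tau G TG) (tau H TH)"
  have "continuous_map (tau G TG) ?tGH (\<lambda>g. (g, \<one>\<^bsub>H\<^esub>))"
    by (rule tau_continuous_map[OF G GH])
      (auto intro!: homI continuous_map_pairedI simp: ts grp group.is_monoid)
  then have "continuous_map ?PT ?tGH (\<lambda>z. (fst z, \<one>\<^bsub>H\<^esub>))"
    using continuous_map_compose[OF continuous_map_fst] by (simp add: o_def)
  moreover have "continuous_map (tau H TH) ?tGH (\<lambda>h. (\<one>\<^bsub>G\<^esub>, h))"
    by (rule tau_continuous_map[OF H GH])
      (auto intro!: homI continuous_map_pairedI simp: ts grp group.is_monoid)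
  then have "continuous_map ?PT ?tGH (\<lambda>z. (\<one>\<^bsub>G\<^esub>, snd z))"
    using continuous_map_compose[OF continuous_map_snd] by (simp add: o_def)
  ultimately have "continuous_map ?PT (prod_topology ?tGH ?tGH)
                     (\<lambda>z. ((fst z, \<one>\<^bsub>H\<^esub>), (\<one>\<^bsub>G\<^esub>, snd z)))"
    by (rule continuous_map_pairedI)
  from continuous_map_compose[OF this topological_group_mult[OF topological_group_tau[OF GH]]]
  show ?thesis
    by (rule continuous_map_eq)
      (auto simp: topspace_tau[OF G] topspace_tau[OF H] grp group.is_monoid monoid.r_one monoid.l_one)
qed

text \<open>The projections are continuous homomorphisms, so
  \<open>\<tau>(G \<times> H)\<close> is finer than \<open>\<tau>(G) \<times> \<tau>(H)\<close>; the converse is the previous lemma.\<close>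

lemma tau_prod:
  assumes G: "group_with_topology G TG" and H: "group_with_topology H TH"
  shows "tau (G \<times>\<times> H) (prod_topology TG TH) = prod_topology (tau G TG) (tau H TH)"
proof -
  note GH = group_with_topology_DirProd[OF G H]
  let ?tGH = "tau (G \<times>\<times> H) (prod_topology TG TH)"
  let ?PT = "prod_topology (tau G TG) (tau H TH)"
  have ts: "topspace ?PT = topspace ?tGH"
    by (simp add: topspace_tau[OF G] topspace_tau[OF H] topspace_tau[OF GH])
  have "continuous_map ?tGH (tau G TG) fst"
    by (rule tau_continuous_map[OF GH G _ continuous_map_fst]) (auto intro: homI)
  moreover have "continuous_map ?tGH (tau H TH) snd"
    by (rule tau_continuous_map[OF GH H _ continuous_map_snd]) (auto intro: homI)
  ultimately have "continuous_map ?tGH ?PT (\<lambda>z. (fst z, snd z))"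
    by (rule continuous_map_pairedI)
  then have "coarser ?PT ?tGH" using ts by (simp add: coarser_iff_continuous_id)
  moreover have "coarser ?tGH ?PT"
    using ts continuous_map_prod_tau_into_tau_prod[OF G H] by (simp add: coarser_iff_continuous_id)
  ultimately show ?thesis by (rule coarser_antisym[symmetric])
qed

theorem proposition3p3:
  fixes G :: "'a monoid" and TG :: "'a topology"
    and H :: "'b monoid" and TH :: "'b topology"
  assumes "group_with_topology G TG" and "group_with_topology H TH"
  shows "tau (G \<times>\<times> H) (prod_topology TG TH) = prod_topology (tau G TG) (tau H TH)
    \<and> (\<forall>f. f \<in> hom G H \<and> quotient_map TG TH f \<longrightarrow> quotient_map (tau G TG) (tau H TH) f)
    \<and> (topological_group G TG \<longleftrightarrow> tau G TG = TG)
    \<and> (TG = discrete_topology (carrier G) \<longleftrightarrow> tau G TG = discrete_topology (carrier G))"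
  using tau_prod[OF assms] tau_quotient_map[OF assms] tau_eq_iff_topological_group[OF assms(1)]
    tau_discrete_iff[OF assms(1)]
  by blast

end
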